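(* Let $p>1$ and let $\varphi:\mathbb{R}^n\to\mathbb{R}\cup\{+\infty\}$ be a proper lower semicontinuous coercive function. If for some $r>0$ and $\lambda\in\mathbb{R}$ we have $\{x:\varphi(x)\le\lambda\}\subseteq\mathbb{B}(0;r)$, then there exists $\hat\gamma>0$ such that for each $\gamma\in(0,\hat\gamma]$, $\{x:\varphi^p_\gamma(x)\le\lambda\}\subseteq\mathbb{B}(0;r)$.
   Context: $\varphi^p_\gamma(x):=\inf_{y\in\mathbb{R}^n}\big(\varphi(y)+\frac{1}{p\gamma}\|x-y\|^p\big)$ (high-order Moreau envelope); $\mathbb{B}(0;r)$ is the open Euclidean ball of radius $r$ centered at the origin. *)

theory Defs
  imports "HOL-Analysis.Analysis" "HOL-Library.Extended_Real"
begin

text \<open>Extended-real-valued functions on R^n, modelled as real ^ 'n \<Rightarrow> ereal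
  (the value -\<infinity> is excluded by properness).\<close>

definition proper_fun :: "('a \<Rightarrow> ereal) \<Rightarrow> bool" where
  "proper_fun \<phi> \<longleftrightarrow> (\<forall>x. \<phi> x \<noteq> -\<infinity>) \<and> (\<exists>x. \<phi> x < \<infinity>)"

definition lsc_fun :: "('a::topological_space \<Rightarrow> ereal) \<Rightarrow> bool" where
  "lsc_fun \<phi> \<longleftrightarrow> (\<forall>x. \<phi> x \<le> Liminf (at x) \<phi>)"

definition coercive_fun :: "('a::real_normed_vector \<Rightarrow> ereal) \<Rightarrow> bool" where
  "coercive_fun \<phi> \<longleftrightarrow> (\<phi> \<longlongrightarrow> \<infinity>) at_infinity"

definition moreau_env :: "real \<Rightarrow> real \<Rightarrow> ('a::real_normed_vector \<Rightarrow> ereal) \<Rightarrow> 'a \<Rightarrow> ereal" where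
  "moreau_env p \<gamma> \<phi> x = (INF y. \<phi> y + ereal (norm (x - y) powr p / (p * \<gamma>)))"

end

theory Submission
  imports Defs
begin

text \<open>Lower semicontinuity and coercivity make every sublevel set of \<open>\<phi>\<close> compact. Two
  nested-compact-set arguments then show that \<open>\<phi>\<close> is bounded below by some \<open>m\<close>, and that
  the hypothesis persists with a margin: \<open>{\<phi> \<le> \<lambda> + \<delta>} \<subseteq> ball 0 (r - \<delta>)\<close> for some \<open>\<delta> > 0\<close>.
  If \<open>\<phi>\<^sup>p\<^sub>\<gamma>(x) \<le> \<lambda>\<close>, some \<open>y\<close> satisfies \<open>\<phi>(y) + \<parallel>x - y\<parallel>\<^sup>p/(p\<gamma>) < \<lambda> + \<delta>\<close>; hence
  \<open>\<parallel>y\<parallel> < r - \<delta>\<close> and \<open>\<parallel>x - y\<parallel>\<^sup>p < p\<gamma>(\<lambda> + \<delta> - m)\<close>, which is at most \<open>\<delta>\<^sup>p\<close> for small \<open>\<gamma>\<close>,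
  so \<open>\<parallel>x\<parallel> < r\<close>.\<close>

lemma lsc_fun_closed_sublevel:
  fixes \<phi> :: "'a::topological_space \<Rightarrow> ereal"
  assumes "lsc_fun \<phi>"
  shows "closed {x. \<phi> x \<le> c}"
proof -
  have "open {x. c < \<phi> x}"
  proof (subst open_subopen, intro ballI)
    fix x assume "x \<in> {x. c < \<phi> x}"
    then have "c < Liminf (at x) \<phi>"
      using assms unfolding lsc_fun_def by (metis mem_Collect_eq order_less_le_trans)
    then have "eventually (\<lambda>y. c < \<phi> y) (at x)" by (rule less_LiminfD)
    then have "eventually (\<lambda>y. y \<noteq> x \<longrightarrow> c < \<phi> y) (nhds x)"
      by (simp add: eventually_at_filter)
    then obtain S where "open S" "x \<in> S" "\<forall>y\<in>S. y \<noteq> x \<longrightarrow> c < \<phi> y"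
      unfolding eventually_nhds by blast
    then show "\<exists>S. open S \<and> x \<in> S \<and> S \<subseteq> {x. c < \<phi> x}"
      using \<open>x \<in> {x. c < \<phi> x}\<close> by auto
  qed
  then show ?thesis by (simp add: closed_def Compl_eq flip: not_less)
qed

lemma coercive_fun_bounded_sublevel:
  fixes \<phi> :: "'a::real_normed_vector \<Rightarrow> ereal"
  assumes "coercive_fun \<phi>"
  shows "bounded {x. \<phi> x \<le> ereal c}"
proof -
  have "eventually (\<lambda>x. ereal c < \<phi> x) at_infinity"
    using assms unfolding coercive_fun_def by (rule order_tendstoD) simp
  then obtain b where "\<forall>x. b \<le> norm x \<longrightarrow> ereal c < \<phi> x"
    unfolding eventually_at_infinity by blast
  then have "{x. \<phi> x \<le> ereal c} \<subseteq> cball 0 b"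
    by (force simp: not_le[symmetric])
  then show ?thesis by (rule bounded_subset[OF bounded_cball])
qed

lemma lsc_coercive_compact_sublevel:
  fixes \<phi> :: "'a::{real_normed_vector, heine_borel} \<Rightarrow> ereal"
  assumes "lsc_fun \<phi>" "coercive_fun \<phi>"
  shows "compact {x. \<phi> x \<le> ereal c}"
  using lsc_fun_closed_sublevel[OF assms(1)] coercive_fun_bounded_sublevel[OF assms(2)]
  by (simp add: compact_eq_bounded_closed)

lemma compact_sublevels_bounded_below:
  fixes \<phi> :: "'a::heine_borel \<Rightarrow> ereal"
  assumes compact: "\<And>c. compact {x. \<phi> x \<le> ereal c}" and finite: "\<And>x. \<phi> x \<noteq> -\<infinity>"
  shows "\<exists>m. \<forall>x. ereal m < \<phi> x"
proof -
  define L where "L n = {x. \<phi> x \<le> ereal (- real n)}" for n :: nat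
  have "\<Inter>(range L) = {}"
  proof (rule ccontr)
    assume "\<Inter>(range L) \<noteq> {}"
    then obtain x where x: "\<And>n. \<phi> x \<le> ereal (- real n)" unfolding L_def by auto
    then obtain a where "\<phi> x = ereal a"
      using finite[of x] by (cases "\<phi> x") (auto dest: spec[of _ 0])
    moreover obtain n :: nat where "- a < real n" using reals_Archimedean2 by blast
    ultimately show False using x[of n] by simp
  qed
  moreover have "L n \<subseteq> L m" if "m \<le> n" for m n
    using that unfolding L_def by (auto elim: order_trans)
  ultimately obtain n where "L n = {}"
    using compact_nest[of L] compact unfolding L_def by blast
  then have "\<forall>x. ereal (- real n) < \<phi> x" unfolding L_def by (auto simp: not_le[symmetric])
  then show ?thesis by blast
qed

lemma compact_sublevels_ball_margin:
  fixes \<phi> :: "'a::{real_normed_vector, heine_borel} \<Rightarrow> ereal"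
  assumes compact: "\<And>c. compact {x. \<phi> x \<le> ereal c}"
    and sub: "{x. \<phi> x \<le> ereal lam} \<subseteq> ball 0 r"
  shows "\<exists>\<delta>>0. {x. \<phi> x \<le> ereal (lam + \<delta>)} \<subseteq> ball 0 (r - \<delta>)"
proof -
  define K where "K n = {x. \<phi> x \<le> ereal (lam + 1 / Suc n)} \<inter> {x. r - 1 / Suc n \<le> norm x}"
    for n :: nat
  have "compact (K n)" for n
    unfolding K_def using compact
    by (intro compact_Int_closed closed_Collect_le continuous_intros)
  moreover have "K n \<subseteq> K m" if "m \<le> n" for m n
  proof -
    have "1 / real (Suc n) \<le> 1 / Suc m" using that by (simp add: frac_le)
    then show ?thesis unfolding K_def by (auto elim: order_trans)
  qed
  moreover have "\<Inter>(range K) = {}"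
  proof (rule ccontr)
    assume "\<Inter>(range K) \<noteq> {}"
    then obtain x where x: "\<And>n. \<phi> x \<le> ereal (lam + 1 / Suc n)" "\<And>n. r - 1 / Suc n \<le> norm x"
      unfolding K_def by auto
    have "\<phi> x \<le> ereal lam"
    proof (rule ereal_le_epsilon2)
      fix e :: real assume "0 < e"
      then obtain n where "1 / real (Suc n) < e" using nat_approx_posE by blast
      then show "\<phi> x \<le> ereal lam + ereal e" using x(1)[of n] by (auto elim: order_trans)
    qed
    moreover have "r \<le> norm x"
    proof (rule field_le_epsilon)
      fix e :: real assume "0 < e"
      then obtain n where "1 / real (Suc n) < e" using nat_approx_posE by blast
      then show "r \<le> norm x + e" using x(2)[of n] by linarith
    qed
    ultimately show False using sub by auto
  qed
  ultimately obtain n where "K n = {}" using compact_nest[of K] by blast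
  then have "{x. \<phi> x \<le> ereal (lam + 1 / Suc n)} \<subseteq> ball 0 (r - 1 / Suc n)"
    unfolding K_def by auto
  then show ?thesis by (intro exI[of _ "1 / Suc n"]) auto
qed

lemma moreau_env_sublevel_subset_ball:
  fixes \<phi> :: "'a::real_normed_vector \<Rightarrow> ereal"
  assumes "0 < p" "0 < \<gamma>" "0 < \<delta>"
    and lower: "\<And>y. ereal m < \<phi> y"
    and margin: "{y. \<phi> y \<le> ereal (lam + \<delta>)} \<subseteq> ball 0 (r - \<delta>)"
    and small: "p * \<gamma> * (lam + \<delta> - m) \<le> \<delta> powr p"
  shows "{x. moreau_env p \<gamma> \<phi> x \<le> ereal lam} \<subseteq> ball 0 r"
proof
  fix x assume "x \<in> {x. moreau_env p \<gamma> \<phi> x \<le> ereal lam}"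
  then have "moreau_env p \<gamma> \<phi> x < ereal (lam + \<delta>)"
    using \<open>0 < \<delta>\<close> by (simp add: le_less_trans)
  then obtain y where y: "\<phi> y + ereal (norm (x - y) powr p / (p * \<gamma>)) < ereal (lam + \<delta>)"
    unfolding moreau_env_def INF_less_iff by blast
  define t where "t = norm (x - y) powr p / (p * \<gamma>)"
  obtain a where a: "\<phi> y = ereal a"
    using y lower[of y] by (cases "\<phi> y") auto
  have "0 \<le> t" unfolding t_def using assms(1,2) by simp
  moreover have "a + t < lam + \<delta>" using y a unfolding t_def by simp
  ultimately have "\<phi> y \<le> ereal (lam + \<delta>)" using a by simp
  then have "norm y < r - \<delta>" using margin by auto
  have "t < lam + \<delta> - m" using \<open>a + t < lam + \<delta>\<close> lower[of y] a by simp
  then have "norm (x - y) powr p < p * \<gamma> * (lam + \<delta> - m)"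
    unfolding t_def using assms(1,2) by (simp add: divide_less_eq mult.commute)
  then have "norm (x - y) powr p < \<delta> powr p" using small by linarith
  then have "norm (x - y) < \<delta>"
    using powr_mono2[of p \<delta> "norm (x - y)"] assms(1) \<open>0 < \<delta>\<close> by (meson less_le_not_le not_le)
  then show "x \<in> ball 0 r"
    using \<open>norm y < r - \<delta>\<close> norm_triangle_ineq[of "x - y" y] by simp
qed

theorem proposition3:
  fixes \<phi> :: "real ^ 'n \<Rightarrow> ereal" and p r :: real and lam :: real
  assumes "p > 1"
    and "proper_fun \<phi>" and "lsc_fun \<phi>" and "coercive_fun \<phi>"
    and "r > 0"
    and "{x. \<phi> x \<le> ereal lam} \<subseteq> ball 0 r"
  shows "\<exists>\<gamma>h>0. \<forall>\<gamma>. 0 < \<gamma> \<and> \<gamma> \<le> \<gamma>h \<longrightarrow>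
           {x. moreau_env p \<gamma> \<phi> x \<le> ereal lam} \<subseteq> ball 0 r"
proof -
  note compact = lsc_coercive_compact_sublevel[OF assms(3,4)]
  obtain m where lower: "\<And>y. ereal m < \<phi> y"
    using compact_sublevels_bounded_below[OF compact] assms(2)
    unfolding proper_fun_def by blast
  obtain \<delta> where "0 < \<delta>" and margin: "{y. \<phi> y \<le> ereal (lam + \<delta>)} \<subseteq> ball 0 (r - \<delta>)"
    using compact_sublevels_ball_margin[OF compact assms(6)] by blast
  define B where "B = max 1 (lam + \<delta> - m)"
  have "0 < B" unfolding B_def by simp
  show ?thesis
  proof (intro exI[of _ "\<delta> powr p / (p * B)"] conjI allI impI)
    show "0 < \<delta> powr p / (p * B)" using \<open>0 < \<delta>\<close> \<open>0 < B\<close> assms(1) by simp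
    fix \<gamma> assume \<gamma>: "0 < \<gamma> \<and> \<gamma> \<le> \<delta> powr p / (p * B)"
    have "p * \<gamma> * (lam + \<delta> - m) \<le> p * \<gamma> * B"
      unfolding B_def using \<gamma> assms(1) by (intro mult_left_mono) auto
    also have "\<dots> \<le> \<delta> powr p"
      using \<gamma> \<open>0 < B\<close> assms(1) by (simp add: le_divide_eq mult.commute mult.left_commute)
    finally show "{x. moreau_env p \<gamma> \<phi> x \<le> ereal lam} \<subseteq> ball 0 r"
      using moreau_env_sublevel_subset_ball[OF _ _ \<open>0 < \<delta>\<close> lower margin] assms(1) \<gamma> by simp
  qed
qed

end
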